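(* Let $q$ be a power of an odd prime, $c\in\mathbb{F}_q^*$, and $f(X)=c(X^{q+1}-X^2)$ on $\mathbb{F}_{q^2}$. The functional graph of $f$ has exactly $\frac{q-1}{2}$ cycles of length two.
   Context: The functional graph of $f$ is the directed graph on $\mathbb{F}_{q^2}$ with edges $x\to f(x)$. *)

theory Defs
  imports Main "HOL-Computational_Algebra.Primes"
begin

text \<open>Cycles of length two in the functional graph of f (the directed graph on the
  type with edges x -> f x): each such cycle is the two-element vertex set {x, f x}
  where f (f x) = x and f x \<noteq> x.\<close>
definition two_cycles :: "('a \<Rightarrow> 'a) \<Rightarrow> 'a set set" where
  "two_cycles f = {{x, f x} | x. f (f x) = x \<and> f x \<noteq> x}"

end

theory Submission
  imports Defs "HOL-Number_Theory.Residues" "HOL-Computational_Algebra.Polynomial"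
begin

text \<open>Write x^q for the Frobenius involution of the field with q^2 elements and put
  s = x + x^q, t = x^q - x, so that s^q = s and t^q = -t. Then f(x) = c x t, and as c^q = c
  one computes f(f(x)) = -c^3 t^2 s x; hence x lies on a 2-cycle iff c^3 t^2 s = -1. Since q is
  odd, x \<mapsto> (s, t) is a bijection onto the product of the two eigenspaces {s. s^q = s} and
  {t. t^q = -t}, each of size at most q as a root set, hence both of size exactly q. The
  equation determines s uniquely from any t \<noteq> 0, giving q - 1 points on 2-cycles.\<close>

lemma card_two_cycle_points:
  fixes f :: "'a \<Rightarrow> 'a"
  shows "card {x. f (f x) = x \<and> f x \<noteq> x} = 2 * card (two_cycles f)"
proof -
  define P where "P = {x. f (f x) = x \<and> f x \<noteq> x}"
  have cycles: "two_cycles f = (\<lambda>x. {x, f x}) ` P"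
    by (auto simp: two_cycles_def P_def)
  have cycle_through: "{z, f z} = {x, f x}" if "x \<in> P" "z \<in> {x, f x}" for x z
    using that by (auto simp: P_def)
  have union: "\<Union> (two_cycles f) = P"
    unfolding cycles by (auto simp: P_def)
  have disjoint: "pairwise disjnt (two_cycles f)"
  proof (rule pairwiseI)
    fix A B assume "A \<in> two_cycles f" "B \<in> two_cycles f" "A \<noteq> B"
    then obtain x y where "x \<in> P" "y \<in> P" "A = {x, f x}" "B = {y, f y}"
      unfolding cycles by blast
    with \<open>A \<noteq> B\<close> show "disjnt A B"
      unfolding disjnt_def using cycle_through by blast
  qed
  have card_cycle: "card A = 2" if "A \<in> two_cycles f" for A
    using that unfolding cycles by (auto simp: P_def)
  have "card P = sum card (two_cycles f)"
    unfolding union[symmetric] using disjoint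
    by (rule card_Union_disjoint) (auto simp: cycles)
  also have "\<dots> = 2 * card (two_cycles f)"
    using card_cycle by simp
  finally show ?thesis
    by (simp add: P_def)
qed

text \<open>The library's finite_field_power_card_eq_same needs the class finite_field, which a type
  variable of sort {field, finite} does not carry; this is the Lagrange argument instead.\<close>

lemma finite_field_power_card:
  fixes x :: "'a :: {field, finite}"
  shows "x ^ card (UNIV :: 'a set) = x"
proof (cases "x = 0")
  case False
  define G :: "'a monoid" where "G = \<lparr>carrier = UNIV - {0}, monoid.mult = (*), one = 1\<rparr>"
  have "group G"
  proof (rule groupI)
    fix y assume "y \<in> carrier G"
    then show "\<exists>z\<in>carrier G. z \<otimes>\<^bsub>G\<^esub> y = \<one>\<^bsub>G\<^esub>"
      by (intro bexI[of _ "inverse y"]) (auto simp: G_def)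
  qed (auto simp: G_def mult.assoc)
  moreover have "x \<in> carrier G"
    using False by (simp add: G_def)
  ultimately have "x [^]\<^bsub>G\<^esub> card (carrier G) = \<one>\<^bsub>G\<^esub>"
    using group.pow_order_eq_1[of G x] unfolding Coset.order_def by blast
  moreover have "y [^]\<^bsub>G\<^esub> n = y ^ n" for y and n :: nat
    by (induction n) (simp_all add: G_def)
  moreover have "card (carrier G) = card (UNIV :: 'a set) - 1"
    by (simp add: G_def card_Diff_singleton)
  ultimately have "x ^ (card (UNIV :: 'a set) - 1) = 1"
    by (simp add: G_def)
  then show ?thesis
    by (metis finite_UNIV_card_ge_0 finite power_minus_mult mult_1)
qed (simp add: finite_UNIV_card_ge_0)

lemma prime_CHAR_finite_field: "prime CHAR('a :: {field, finite})"
  by (simp add: finite_imp_CHAR_pos prime_CHAR_semidom)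

lemma CHAR_eq_if_card_eq_prime_power:
  assumes "prime p" and "card (UNIV :: 'a :: {field, finite} set) = p ^ n"
  shows "CHAR('a) = p"
proof -
  have "CHAR('a) dvd p ^ n"
    using CHAR_dvd_CARD[where 'a = 'a] assms(2) by simp
  then have "CHAR('a) dvd p"
    using prime_CHAR_finite_field prime_dvd_power by blast
  with assms(1) show ?thesis
    using prime_CHAR_finite_field primes_dvd_imp_eq by blast
qed

lemma two_neq_zero_if_odd_CHAR:
  assumes "odd CHAR('a :: semiring_1)"
  shows "(2 :: 'a) \<noteq> 0"
proof
  assume "(2 :: 'a) = 0"
  then have "CHAR('a) dvd 2"
    by (metis of_nat_eq_0_iff_char_dvd of_nat_numeral)
  moreover have "CHAR('a) \<le> 2"
    using \<open>CHAR('a) dvd 2\<close> by (rule dvd_imp_le) simp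
  moreover have "CHAR('a) \<noteq> 0"
    using \<open>CHAR('a) dvd 2\<close> by (intro notI) simp
  ultimately have "CHAR('a) = 1"
    using assms by (auto simp: le_Suc_eq numeral_2_eq_2)
  then show False
    using of_nat_CHAR[where 'a = 'a] by simp
qed

lemma two_le_if_card_field_eq_square:
  assumes "card (UNIV :: 'a :: {field, finite} set) = q ^ 2"
  shows "2 \<le> q"
proof -
  have "card {0, 1 :: 'a} \<le> card (UNIV :: 'a set)"
    by (rule card_mono) simp_all
  then have "2 \<le> q ^ 2"
    using assms by simp
  show ?thesis
  proof (rule ccontr)
    assume "\<not> 2 \<le> q"
    then have "q ^ 2 \<le> 1"
      by (intro power_le_one) simp_all
    with \<open>2 \<le> q ^ 2\<close> show False
      by simp
  qed
qed

lemma frobenius_involutive: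
  fixes x :: "'a :: {field, finite}"
  assumes "card (UNIV :: 'a set) = q ^ 2"
  shows "(x ^ q) ^ q = x"
  using finite_field_power_card[of x] assms by (simp add: power2_eq_square power_mult)

lemma frobenius_diff:
  fixes x y :: "'a :: comm_ring_1"
  assumes "prime CHAR('a)" and "q = CHAR('a) ^ k"
  shows "(x - y) ^ q = x ^ q - y ^ q"
  using freshmans_dream'[OF assms, of "x - y" y] by (simp add: algebra_simps)

lemma card_roots_power_eq_scaled_le:
  fixes a :: "'a :: field"
  assumes "q \<ge> 2"
  shows "card {x. x ^ q = a * x} \<le> q"
proof -
  define P where "P = monom 1 q + [:0, - a:]"
  have "degree [:0, - a:] < degree (monom (1 :: 'a) q)"
    using assms by (simp add: degree_monom_eq)
  then have "degree P = q"
    unfolding P_def by (simp add: degree_add_eq_left degree_monom_eq)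
  moreover have "P \<noteq> 0"
    using assms \<open>degree P = q\<close> by auto
  moreover have "{x. x ^ q = a * x} = {x. poly P x = 0}"
    by (auto simp: P_def poly_monom algebra_simps)
  ultimately show ?thesis
    using card_poly_roots_bound by metis
qed

lemma inj_frobenius_split:
  fixes q :: nat
  assumes "(2 :: 'a :: field) \<noteq> 0"
  shows "inj (\<lambda>x :: 'a. (x + x ^ q, x ^ q - x))"
proof (rule injI)
  fix x y :: 'a
  assume "(x + x ^ q, x ^ q - x) = (y + y ^ q, y ^ q - y)"
  then have "(x + x ^ q) - (x ^ q - x) = (y + y ^ q) - (y ^ q - y)"
    by simp
  then have "x + x = y + y"
    by simp
  then have "2 * x = 2 * y"
    by (simp only: mult_2)
  with assms show "x = y"
    by simp
qed

lemma frobenius_map_twice: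
  fixes c x :: "'a :: comm_ring_1"
  assumes "c ^ q = c" and "(x ^ q - x) ^ q = x - x ^ q"
  defines "F \<equiv> \<lambda>y. c * (y ^ (q + 1) - y ^ 2)"
  shows "F (F x) = - (c ^ 3 * (x ^ q - x) ^ 2 * (x + x ^ q)) * x"
proof -
  have F_eq: "F y = c * y * (y ^ q - y)" for y
    by (simp add: F_def power2_eq_square algebra_simps)
  have "F x ^ q = c * x ^ q * (x - x ^ q)"
    by (simp add: F_eq power_mult_distrib assms(1,2))
  then show ?thesis
    by (simp add: F_eq[of "F x"]) (simp add: F_eq power2_eq_square power3_eq_cube algebra_simps)
qed

lemma two_cycle_point_iff:
  fixes c x :: "'a :: field"
  assumes "q > 0" and "(2 :: 'a) \<noteq> 0" and "c \<noteq> 0" and "c ^ q = c"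
    and anti_fixed: "(x ^ q - x) ^ q = x - x ^ q"
  defines "F \<equiv> \<lambda>y. c * (y ^ (q + 1) - y ^ 2)"
  shows "F (F x) = x \<and> F x \<noteq> x \<longleftrightarrow> c ^ 3 * (x ^ q - x) ^ 2 * (x + x ^ q) = - 1"
proof -
  define t where "t = x ^ q - x"
  have FF: "F (F x) = - (c ^ 3 * t ^ 2 * (x + x ^ q)) * x"
    unfolding F_def t_def using assms(4) anti_fixed by (rule frobenius_map_twice)
  have F_eq: "F x = c * t * x"
    by (simp add: F_def t_def power2_eq_square algebra_simps)
  show ?thesis
  proof
    assume "F (F x) = x \<and> F x \<noteq> x"
    then have "x \<noteq> 0" and "- (c ^ 3 * t ^ 2 * (x + x ^ q)) * x = 1 * x"
      using FF F_eq by auto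
    then show "c ^ 3 * (x ^ q - x) ^ 2 * (x + x ^ q) = - 1"
      unfolding t_def by (metis minus_equation_iff mult_cancel_right)
  next
    assume norm: "c ^ 3 * (x ^ q - x) ^ 2 * (x + x ^ q) = - 1"
    then have "t \<noteq> 0" and "x \<noteq> 0"
      using \<open>q > 0\<close> by (auto simp: t_def power_0_left)
    have "c * t \<noteq> 1"
    proof
      assume "c * t = 1"
      then have "t ^ q = t"
        using \<open>c ^ q = c\<close> by (metis inverse_unique power_inverse)
      moreover have "t ^ q = - t"
        using anti_fixed by (simp add: t_def)
      ultimately have "2 * t = 0"
        by (metis add.right_inverse mult_2)
      with \<open>t \<noteq> 0\<close> \<open>(2 :: 'a) \<noteq> 0\<close> show False
        by simp
    qed
    with \<open>x \<noteq> 0\<close> have "F x \<noteq> x"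
      by (simp add: F_eq)
    moreover have "F (F x) = x"
      using FF norm by (simp add: t_def)
    ultimately show "F (F x) = x \<and> F x \<noteq> x"
      by simp
  qed
qed

context
  fixes q k :: nat
  assumes q_eq: "q = CHAR('a :: {field, finite}) ^ k"
    and card_eq: "card (UNIV :: 'a set) = q ^ 2"
    and two_nonzero: "(2 :: 'a) \<noteq> 0"
begin

lemma frobenius_split_mem: "(x + x ^ q, x ^ q - x) \<in> {s. s ^ q = s} \<times> {t :: 'a. t ^ q = - t}"
  using freshmans_dream'[OF prime_CHAR_finite_field q_eq] frobenius_diff[OF prime_CHAR_finite_field q_eq]
    frobenius_involutive[OF card_eq] by (simp add: add.commute)

lemma card_frobenius_eigenspaces_le:
  shows "card {s :: 'a. s ^ q = s} \<le> q" and "card {t :: 'a. t ^ q = - t} \<le> q"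
proof -
  have "q \<ge> 2"
    using card_eq by (rule two_le_if_card_field_eq_square)
  then show "card {s :: 'a. s ^ q = s} \<le> q" and "card {t :: 'a. t ^ q = - t} \<le> q"
    using card_roots_power_eq_scaled_le[of q 1] card_roots_power_eq_scaled_le[of q "- 1"] by simp_all
qed

lemma bij_frobenius_split:
  "bij_betw (\<lambda>x. (x + x ^ q, x ^ q - x)) UNIV ({s. s ^ q = s} \<times> {t :: 'a. t ^ q = - t})"
    (is "bij_betw ?split UNIV (?K \<times> ?M)")
proof -
  have "card (?K \<times> ?M) \<le> card (range ?split)"
    using card_frobenius_eigenspaces_le card_eq inj_frobenius_split[OF two_nonzero]
    by (simp add: card_cartesian_product card_image power2_eq_square mult_le_mono)
  moreover have "range ?split \<subseteq> ?K \<times> ?M"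
    using frobenius_split_mem by blast
  ultimately have "range ?split = ?K \<times> ?M"
    by (intro card_seteq) simp_all
  then show ?thesis
    using inj_frobenius_split[OF two_nonzero] by (simp add: bij_betw_def)
qed

lemma card_frobenius_anti_fixed: "card {t :: 'a. t ^ q = - t} = q"
proof -
  have "q * q = card {s :: 'a. s ^ q = s} * card {t :: 'a. t ^ q = - t}"
    using bij_betw_same_card[OF bij_frobenius_split] card_eq
    by (simp add: card_cartesian_product power2_eq_square)
  also have "\<dots> \<le> q * card {t :: 'a. t ^ q = - t}"
    using card_frobenius_eigenspaces_le(1) by (rule mult_le_mono1)
  finally have "q \<le> card {t :: 'a. t ^ q = - t}"
    using two_le_if_card_field_eq_square[OF card_eq] by simp
  with card_frobenius_eigenspaces_le(2) show ?thesis
    by (rule le_antisym)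
qed

lemma eigenspace_solutions_eq_graph:
  fixes a :: 'a
  assumes "a \<noteq> 0" and "a ^ q = a"
  shows "{(s, t) \<in> {s. s ^ q = s} \<times> {t. t ^ q = - t}. a * t ^ 2 * s = - 1}
    = (\<lambda>t. (- inverse (a * t ^ 2), t)) ` ({t. t ^ q = - t} - {0})"
proof -
  have "q > 0"
    using two_le_if_card_field_eq_square[OF card_eq] by simp
  then have uminus: "(- y) ^ q = - (y ^ q)" for y :: 'a
    using frobenius_diff[OF prime_CHAR_finite_field q_eq, of 0 y] by simp
  have "(- inverse (a * t ^ 2)) ^ q = - inverse (a * t ^ 2)" if "t ^ q = - t" for t
  proof -
    have "(t ^ 2) ^ q = (t ^ q) ^ 2"
      by (simp flip: power_mult add: mult.commute)
    with that \<open>a ^ q = a\<close> show ?thesis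
      by (simp add: uminus power_inverse power_mult_distrib)
  qed
  moreover have "s = - inverse (a * t ^ 2)" if "a * t ^ 2 * s = - 1" for s t
    using that by (metis inverse_unique minus_equation_iff mult_minus_right)
  moreover have "a * t ^ 2 * - inverse (a * t ^ 2) = - 1" if "t \<noteq> 0" for t
    using that \<open>a \<noteq> 0\<close> by (simp add: field_simps)
  ultimately show ?thesis
    by (auto simp: image_iff simp del: inverse_mult_distrib)
qed

lemma card_two_cycle_points_frobenius_map:
  fixes c :: 'a
  assumes "c \<noteq> 0" and "c ^ q = c"
  defines "F \<equiv> \<lambda>x. c * (x ^ (q + 1) - x ^ 2)"
  shows "card {x. F (F x) = x \<and> F x \<noteq> x} = q - 1"
proof -
  let ?split = "\<lambda>x :: 'a. (x + x ^ q, x ^ q - x)"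
  define S where "S = {(s, t) \<in> {s. s ^ q = s} \<times> {t. t ^ q = - t}. c ^ 3 * t ^ 2 * s = - 1}"
  have "q > 0"
    using two_le_if_card_field_eq_square[OF card_eq] by simp
  have "(c ^ 3) ^ q = c ^ 3"
    using \<open>c ^ q = c\<close> by (metis mult.commute power_mult)
  have "F (F x) = x \<and> F x \<noteq> x \<longleftrightarrow> ?split x \<in> S" for x
  proof -
    have "(x + x ^ q) ^ q = x + x ^ q" and "(x ^ q - x) ^ q = x - x ^ q"
      using frobenius_split_mem[of x] by simp_all
    then show ?thesis
      unfolding F_def S_def using two_cycle_point_iff[OF \<open>q > 0\<close> two_nonzero assms(1,2)] by simp
  qed
  then have "{x. F (F x) = x \<and> F x \<noteq> x} = ?split -` S"
    by blast
  moreover have "bij_betw ?split (?split -` S) S"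
  proof (rule bij_betw_subset[OF bij_frobenius_split subset_UNIV])
    show "?split ` (?split -` S) = S"
      using bij_betw_imp_surj_on[OF bij_frobenius_split]
      unfolding image_vimage_eq by (auto simp: S_def)
  qed
  ultimately have "card {x. F (F x) = x \<and> F x \<noteq> x} = card S"
    by (simp add: bij_betw_same_card)
  also have "S = (\<lambda>t. (- inverse (c ^ 3 * t ^ 2), t)) ` ({t. t ^ q = - t} - {0})"
    unfolding S_def using \<open>c \<noteq> 0\<close> \<open>(c ^ 3) ^ q = c ^ 3\<close>
    by (intro eigenspace_solutions_eq_graph) simp_all
  also have "card \<dots> = card ({t :: 'a. t ^ q = - t} - {0})"
    by (simp add: card_image inj_on_def)
  also have "\<dots> = q - 1"
    using card_frobenius_anti_fixed \<open>q > 0\<close> by simp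
  finally show ?thesis .
qed

end

theorem corollary10:
  fixes c :: "'a :: {field, finite}" and p k q :: nat
  assumes "prime p" and "odd p" and "k \<ge> 1" and "q = p ^ k"
    and "card (UNIV :: 'a set) = q ^ 2"
    and "c \<noteq> 0" and "c ^ q = c"
  shows "card (two_cycles (\<lambda>x. c * (x ^ (q + 1) - x ^ 2))) = (q - 1) div 2"
    (is "card (two_cycles ?f) = _")
proof -
  have "CHAR('a) = p"
    using assms(1,4,5) by (intro CHAR_eq_if_card_eq_prime_power[of p "k * 2"]) (simp_all add: power_mult)
  then have q_eq: "q = CHAR('a) ^ k" and "(2 :: 'a) \<noteq> 0"
    using assms(2,4) two_neq_zero_if_odd_CHAR[where 'a = 'a] by simp_all
  then have "card {x. ?f (?f x) = x \<and> ?f x \<noteq> x} = q - 1"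
    using assms(5-7) by (intro card_two_cycle_points_frobenius_map)
  then show ?thesis
    using card_two_cycle_points[of ?f] by simp
qed

end
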